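(* For all positive integers $d,t,k,w$ with $dt+1\le k$, there is a $t$-private $k$-server PIR protocol for databases of $N$ records, each record being $w(k-dt)\lceil\log_2k\rceil$ bits long, such that the upload cost is $O(k^3\log k\cdot N^{1/d})$ bits and the download cost is $wk\lceil\log_2k\rceil$ bits. Consequently its download rate is $1-dt/k$.
   Context: A $t$-private $k$-server private information retrieval (PIR) protocol for databases in $\mathcal{Y}^N$ (replicated at all $k$ servers) lets a client retrieve the $i$-th symbol for any $i\in[N]$ so that the client's messages to any $t$ servers have a distribution independent of $i$. Equivalently it is a $t$-private $k$-server HSS with $m=1$ input $i\in[N]$ for the class of all functions $f:[N]\to\mathcal{Y}$ (the database): the client shares $i$ with $\mathsf{Share}$, each server returns $\mathsf{Eval}(f,j,\text{its share})$, and the client runs $\mathsf{Rec}$ to obtain $f(i)$ with probability 1. Upload cost is the total bit length of the input shares; download cost is the total bit length of the output shares; download rate is $\log_2|\mathcal{Y}|$ divided by the download cost. *)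

theory Defs
  imports "HOL-Probability.Probability"
begin

text \<open>A database of N records of L bits is a list db of length N of bool lists of length L;
  record indices are 0..N-1, server indices are 0..k-1.\<close>

definition clog2 :: "nat \<Rightarrow> nat" where
  "clog2 k = nat \<lceil>log 2 (real k)\<rceil>"

definition valid_db :: "nat \<Rightarrow> nat \<Rightarrow> bool list list \<Rightarrow> bool" where
  "valid_db N L db \<longleftrightarrow> length db = N \<and> (\<forall>x\<in>set db. length x = L)"

text \<open>A t-private k-server PIR protocol (= t-private k-server HSS with one input i in [N]
  for the class of all databases f : [N] -> {0,1}^L).
  Share i is the (randomized) vector of k input shares; Eval db j s is the output share of
  server j; Rec maps the k output shares to the record, correct with probability 1.\<close>

definition is_PIR ::
  "nat \<Rightarrow> nat \<Rightarrow> nat \<Rightarrow> nat \<Rightarrow> (nat \<Rightarrow> bool list list pmf)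
   \<Rightarrow> (bool list list \<Rightarrow> nat \<Rightarrow> bool list \<Rightarrow> bool list)
   \<Rightarrow> (bool list list \<Rightarrow> bool list) \<Rightarrow> bool" where
  "is_PIR t k N L Share Eval Rec \<longleftrightarrow>
     (\<forall>i<N. \<forall>s\<in>set_pmf (Share i). length s = k) \<and>
     (\<forall>db i. valid_db N L db \<and> i < N \<longrightarrow>
        (\<forall>s\<in>set_pmf (Share i). Rec (map (\<lambda>j. Eval db j (s ! j)) [0..<k]) = db ! i)) \<and>
     (\<forall>T i i'. T \<subseteq> {..<k} \<and> card T \<le> t \<and> i < N \<and> i' < N \<longrightarrow>
        map_pmf (\<lambda>s. map (\<lambda>j. s ! j) (sorted_list_of_set T)) (Share i) =
        map_pmf (\<lambda>s. map (\<lambda>j. s ! j) (sorted_list_of_set T)) (Share i'))"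

definition upload_cost_le :: "nat \<Rightarrow> (nat \<Rightarrow> bool list list pmf) \<Rightarrow> real \<Rightarrow> bool" where
  "upload_cost_le N Share U \<longleftrightarrow>
     (\<forall>i<N. \<forall>s\<in>set_pmf (Share i). real (sum_list (map length s)) \<le> U)"

definition download_cost_eq ::
  "nat \<Rightarrow> nat \<Rightarrow> nat \<Rightarrow> (nat \<Rightarrow> bool list list pmf)
   \<Rightarrow> (bool list list \<Rightarrow> nat \<Rightarrow> bool list \<Rightarrow> bool list) \<Rightarrow> nat \<Rightarrow> bool" where
  "download_cost_eq k N L Share Eval D \<longleftrightarrow>
     (\<forall>db i. valid_db N L db \<and> i < N \<longrightarrow>
        (\<forall>s\<in>set_pmf (Share i). sum_list (map (\<lambda>j. length (Eval db j (s ! j))) [0..<k]) = D))"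

definition download_rate :: "nat \<Rightarrow> nat \<Rightarrow> real" where
  "download_rate L D = real L / real D"

end

theory Submission
  imports Defs "HOL-Library.Z2" "HOL-Library.Function_Algebras" "HOL-Algebra.Algebraic_Closure_Type"
    "HOL-Analysis.Harmonic_Numbers"
begin

text \<open>
  Work in the finite field \<open>F = GF(2^c)[\<beta>]\<close> of degree \<open>n \<ge> k - dt\<close> over \<open>GF(2^c)\<close>, where
  \<open>2^c \<ge> k\<close> and \<open>\<beta> \<notin> GF(2^c)\<close>. The index \<open>i < N\<close> is written with \<open>d\<close> digits in base \<open>r = \<lceil>N^(1/d)\<rceil>\<close>
  and encoded as \<open>d\<close> unit vectors of length \<open>r\<close>, so that each record is selected by a
  degree-\<open>d\<close> monomial in the query coordinates. Every coordinate is hidden in a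
  polynomial of degree \<open>t\<close> whose value at \<open>\<beta>\<close> is the coordinate and whose other \<open>t\<close>
  coefficients are uniform; server \<open>j\<close> receives its values at the point
  \<open>\<alpha>\<^sub>j \<in> GF(2^c)\<close>, so any \<open>t\<close> servers see uniform noise. A block of \<open>l = k - dt\<close>
  symbols \<open>b\<^sub>q \<in> GF(2^c)\<close> of the record is stored as \<open>\<Sum>\<^sub>q b\<^sub>q \<beta>^(n-1-q) \<in> F\<close>.
  Server \<open>j\<close> evaluates the database polynomial on its shares, multiplies by its
  Lagrange weight for interpolation at \<open>\<beta>\<close>, and returns only the coefficient \<open>\<tau>\<close> of \<open>\<beta>^(n-1)\<close>
  in the result, one symbol of \<open>GF(2^c)\<close>. Since all polynomials involved have
  degree \<open>< k\<close> after multiplication by \<open>x^p\<close>, \<open>p < l\<close>, the client obtains the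
  \<open>GF(2^c)\<close>-linear combinations \<open>\<tau>(\<beta>^p \<Sum>\<^sub>q b\<^sub>q \<beta>^(n-1-q))\<close>, a unitriangular system
  in the \<open>b\<^sub>q\<close>. Hence \<open>k\<close> symbols are downloaded per \<open>l\<close> symbols retrieved.
\<close>

section \<open>Finite subfields of the algebraic closure of GF(2)\<close>

type_synonym gf2_closure = "bit alg_closure"

lemma two_eq_zero_char2: "(2::gf2_closure) = 0"
  by (metis to_ac_numeral bit_2_eq_0 to_ac_0)

lemma add_self_char2[simp]: "(x::gf2_closure) + x = 0"
  by (metis mult_2 mult_zero_left two_eq_zero_char2)

lemma uminus_char2[simp]: "- (x::gf2_closure) = x"
  by (metis add_self_char2 add.inverse_unique)

lemma minus_eq_add_char2: "(x::gf2_closure) - y = x + y"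
  by simp

lemma power_two_power_add_char2: "((x::gf2_closure) + y) ^ (2^m) = x ^ (2^m) + y ^ (2^m)"
proof (induction m)
  case (Suc m)
  have square_add: "(u + v) ^ 2 = u ^ 2 + v ^ 2" for u v :: gf2_closure
  proof -
    have "(u + v) ^ 2 = u ^ 2 + v ^ 2 + 2 * u * v" by (simp add: power2_eq_square algebra_simps)
    then show ?thesis by (simp add: two_eq_zero_char2)
  qed
  have "(x + y) ^ (2 ^ Suc m) = ((x + y) ^ (2 ^ m)) ^ 2"
    by (simp add: power_mult[symmetric] mult.commute)
  also have "\<dots> = x ^ (2 ^ Suc m) + y ^ (2 ^ Suc m)"
    by (simp add: Suc square_add power_mult[symmetric] mult.commute)
  finally show ?case .
qed simp

lemma card_roots_separable:
  fixes p :: "'a::alg_closed_field poly"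
  assumes "p \<noteq> 0" "\<And>x. poly p x = 0 \<Longrightarrow> poly (pderiv p) x \<noteq> 0"
  shows "card {x. poly p x = 0} = Polynomial.degree p"
  using assms
proof (induction "Polynomial.degree p" arbitrary: p rule: less_induct)
  case (less p)
  show ?case
  proof (cases "Polynomial.degree p = 0")
    case True
    then obtain a where "p = [:a:]" by (meson degree_eq_zeroE)
    with less.prems True show ?thesis by simp
  next
    case False
    then obtain x where x: "poly p x = 0"
      using alg_closed_imp_poly_has_root by blast
    then obtain q where p_eq: "p = [:-x, 1:] * q"
      using poly_eq_0_iff_dvd by (blast elim: dvdE)
    have "q \<noteq> 0" using less.prems p_eq by auto
    have deg: "Polynomial.degree p = Suc (Polynomial.degree q)"
      unfolding p_eq using \<open>q \<noteq> 0\<close> by (subst degree_mult_eq) auto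
    have pd: "pderiv p = q + [:-x, 1:] * pderiv q"
      unfolding p_eq by (subst pderiv_mult) (simp add: pderiv_pCons add.commute)
    have qx: "poly q x \<noteq> 0"
      using less.prems(2)[OF x] pd by simp
    have IH: "card {y. poly q y = 0} = Polynomial.degree q"
    proof (rule less.hyps)
      show "Polynomial.degree q < Polynomial.degree p" using deg by simp
      show "q \<noteq> 0" by fact
      fix y assume y: "poly q y = 0"
      then have "poly (pderiv p) y \<noteq> 0" using less.prems(2) by (simp add: p_eq)
      then show "poly (pderiv q) y \<noteq> 0" using pd y by auto
    qed
    have "{y. poly p y = 0} = insert x {y. poly q y = 0}"
      by (auto simp: p_eq x)
    moreover have "finite {y. poly q y = 0}" using \<open>q \<noteq> 0\<close> poly_roots_finite by blast
    ultimately show ?thesis using qx IH deg by simp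
  qed
qed

definition GF :: "nat \<Rightarrow> gf2_closure set" where
  "GF m = {x. x ^ (2^m) = x}"

lemma
  assumes "m \<ge> 1"
  shows GF_card: "card (GF m) = 2^m" and finite_GF: "finite (GF m)"
proof -
  define p :: "gf2_closure poly" where "p = Polynomial.monom 1 (2^m) - [:0, 1:]"
  have m2: "(2::nat) \<le> 2^m" using assms
    by (metis one_le_numeral power_increasing power_one_right)
  have degp: "Polynomial.degree p = 2^m" unfolding p_def
    using m2 by (simp add: diff_conv_add_uminus degree_add_eq_left degree_monom_eq)
  have p0: "p \<noteq> 0" using degp m2 by auto
  have "(2::gf2_closure) ^ m = 0" using assms by (simp add: two_eq_zero_char2)
  then have pd: "pderiv p = - 1"
    unfolding p_def by (simp add: pderiv_diff pderiv_monom pderiv_pCons pCons_one)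
  have roots: "{x. poly p x = 0} = GF m"
    unfolding p_def GF_def by (auto simp: poly_monom)
  have "card {x. poly p x = 0} = Polynomial.degree p"
    by (rule card_roots_separable[OF p0]) (simp add: pd)
  then show "card (GF m) = 2^m" using roots degp by simp
  show "finite (GF m)" using roots poly_roots_finite[OF p0] by simp
qed

lemma GF_0[simp]: "0 \<in> GF m" and GF_1[simp]: "1 \<in> GF m"
  by (auto simp: GF_def)

lemma GF_add[simp]: "x \<in> GF m \<Longrightarrow> y \<in> GF m \<Longrightarrow> x + y \<in> GF m"
  by (simp add: GF_def power_two_power_add_char2)

lemma GF_mult[simp]: "x \<in> GF m \<Longrightarrow> y \<in> GF m \<Longrightarrow> x * y \<in> GF m"
  by (simp add: GF_def power_mult_distrib)

lemma GF_inverse[simp]: "x \<in> GF m \<Longrightarrow> inverse x \<in> GF m"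
  by (simp add: GF_def power_inverse)

lemma GF_divide[simp]: "x \<in> GF m \<Longrightarrow> y \<in> GF m \<Longrightarrow> x / y \<in> GF m"
  by (simp add: divide_inverse)

lemma GF_power[simp]: "x \<in> GF m \<Longrightarrow> x ^ e \<in> GF m"
  by (induction e) auto

lemma GF_sum[simp]: "(\<And>i. i \<in> I \<Longrightarrow> f i \<in> GF m) \<Longrightarrow> sum f I \<in> GF m"
  by (induction I rule: infinite_finite_induct) auto

lemma GF_subset_GF_mult: "GF c \<subseteq> GF (c * j)"
proof
  fix x assume x: "x \<in> GF c"
  have "x ^ (2 ^ (c * j)) = x"
  proof (induction j)
    case (Suc j)
    have "x ^ (2 ^ (c * Suc j)) = (x ^ (2 ^ (c * j))) ^ (2 ^ c)"
      by (simp add: power_add power_mult[symmetric] mult.commute)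
    also have "\<dots> = x" using Suc x by (simp add: GF_def)
    finally show ?case .
  qed simp
  then show "x \<in> GF (c * j)" by (simp add: GF_def)
qed

section \<open>Linear independence of powers over GF(2^c)\<close>

definition GF_vecs :: "nat \<Rightarrow> nat \<Rightarrow> (nat \<Rightarrow> gf2_closure) set" where
  "GF_vecs c m = {b. (\<forall>e<m. b e \<in> GF c) \<and> (\<forall>e\<ge>m. b e = 0)}"

definition pow_comb :: "gf2_closure \<Rightarrow> nat \<Rightarrow> (nat \<Rightarrow> gf2_closure) \<Rightarrow> gf2_closure" where
  "pow_comb \<beta> m b = (\<Sum>e<m. b e * \<beta> ^ e)"

definition powers_indep :: "nat \<Rightarrow> gf2_closure \<Rightarrow> nat \<Rightarrow> bool" where
  "powers_indep c \<beta> m \<longleftrightarrow> (\<forall>b\<in>GF_vecs c m. pow_comb \<beta> m b = 0 \<longrightarrow> (\<forall>e<m. b e = 0))"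

lemma GF_vecs_add: "b \<in> GF_vecs c m \<Longrightarrow> b' \<in> GF_vecs c m \<Longrightarrow> b + b' \<in> GF_vecs c m"
  by (auto simp: GF_vecs_def)

lemma GF_vecs_mono:
  assumes "b \<in> GF_vecs c m" "m \<le> m'"
  shows "b \<in> GF_vecs c m'"
proof -
  have "b e \<in> GF c" if "e < m'" for e
    using assms by (cases "e < m") (auto simp: GF_vecs_def)
  then show ?thesis using assms by (auto simp: GF_vecs_def)
qed

lemma pow_comb_add: "pow_comb \<beta> m (b + b') = pow_comb \<beta> m b + pow_comb \<beta> m b'"
  by (simp add: pow_comb_def sum.distrib algebra_simps)

lemma pow_comb_extend:
  assumes "b \<in> GF_vecs c m" "m \<le> m'"
  shows "pow_comb \<beta> m' b = pow_comb \<beta> m b"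
  unfolding pow_comb_def using assms
  by (intro sum.mono_neutral_right) (auto simp: GF_vecs_def)

lemma pow_comb_in_GF:
  assumes "b \<in> GF_vecs c m" "\<beta> \<in> GF (c * j)"
  shows "pow_comb \<beta> m b \<in> GF (c * j)"
  unfolding pow_comb_def using assms GF_subset_GF_mult[of c j] by (auto simp: GF_vecs_def intro!: GF_sum)

lemma
  assumes "c \<ge> 1"
  shows card_GF_vecs: "card (GF_vecs c m) = 2 ^ (c * m)"
    and finite_GF_vecs: "finite (GF_vecs c m)"
proof -
  have bij: "bij_betw (\<lambda>b. restrict b {..<m}) (GF_vecs c m) (PiE {..<m} (\<lambda>_. GF c))"
  proof (rule bij_betwI[where g = "\<lambda>f e. if e < m then f e else 0"])
    show "(\<lambda>b. restrict b {..<m}) \<in> GF_vecs c m \<rightarrow> PiE {..<m} (\<lambda>_. GF c)"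
      by (auto simp: GF_vecs_def)
    show "(\<lambda>f e. if e < m then f e else 0) \<in> PiE {..<m} (\<lambda>_. GF c) \<rightarrow> GF_vecs c m"
      by (auto simp: GF_vecs_def PiE_def Pi_def)
    show "(\<lambda>e. if e < m then restrict x {..<m} e else 0) = x" if "x \<in> GF_vecs c m" for x
      using that by (auto simp: GF_vecs_def fun_eq_iff)
    show "restrict (\<lambda>e. if e < m then y e else 0) {..<m} = y" if "y \<in> PiE {..<m} (\<lambda>_. GF c)" for y
      using that by (auto simp: PiE_def extensional_def fun_eq_iff)
  qed
  have "card (PiE {..<m} (\<lambda>_. GF c)) = (2^c)^m"
    by (simp add: card_PiE GF_card[OF assms])
  then show "card (GF_vecs c m) = 2 ^ (c * m)"
    using bij_betw_same_card[OF bij] by (simp add: power_mult)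
  show "finite (GF_vecs c m)"
    using bij_betw_finite[OF bij] finite_GF[OF assms] by (simp add: finite_PiE)
qed

lemma powers_indep_mono:
  assumes "m \<le> m'" "powers_indep c \<beta> m'"
  shows "powers_indep c \<beta> m"
  unfolding powers_indep_def
proof (intro ballI impI allI)
  fix b e assume b: "b \<in> GF_vecs c m" and "pow_comb \<beta> m b = 0" and "e < m"
  then show "b e = 0"
    using assms GF_vecs_mono[OF b assms(1)] pow_comb_extend[OF b assms(1)]
    unfolding powers_indep_def by auto
qed

lemma pow_comb_inj:
  assumes ind: "powers_indep c \<beta> m" and b: "b \<in> GF_vecs c m" and b': "b' \<in> GF_vecs c m"
    and eq: "pow_comb \<beta> m b = pow_comb \<beta> m b'"
  shows "b = b'"
proof -
  have "pow_comb \<beta> m (b + b') = 0" using eq by (simp add: pow_comb_add)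
  then have "\<forall>e<m. b e + b' e = 0" using ind GF_vecs_add[OF b b'] unfolding powers_indep_def by auto
  then have "\<forall>e<m. b e = b' e"
    by (metis add_self_char2 add_right_cancel)
  moreover have "\<forall>e\<ge>m. b e = b' e" using b b' by (simp add: GF_vecs_def)
  ultimately show "b = b'" by (metis ext not_le)
qed

lemma powers_indep_le:
  assumes c: "c \<ge> 1" and j: "j \<ge> 1" and \<beta>: "\<beta> \<in> GF (c * j)" and ind: "powers_indep c \<beta> m"
  shows "m \<le> j"
proof -
  have "inj_on (pow_comb \<beta> m) (GF_vecs c m)"
    using pow_comb_inj[OF ind] by (auto intro: inj_onI)
  moreover have "pow_comb \<beta> m ` GF_vecs c m \<subseteq> GF (c * j)"
    using pow_comb_in_GF \<beta> by blast
  moreover have cj: "c * j \<ge> 1" using c j by simp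
  ultimately have "card (GF_vecs c m) \<le> card (GF (c * j))"
    using card_inj_on_le finite_GF by blast
  then have "(2::nat) ^ (c * m) \<le> 2 ^ (c * j)" using card_GF_vecs[OF c] GF_card[OF cj] by simp
  then show "m \<le> j" using c by simp
qed

lemma pow_comb_roots:
  assumes b: "b \<in> GF_vecs c m" and nz: "b \<noteq> 0"
  shows "finite {x. pow_comb x m b = 0}" "card {x. pow_comb x m b = 0} \<le> m"
proof -
  define P where "P = (\<Sum>e<m. Polynomial.monom (b e) e)"
  have "poly.coeff P e = b e" for e
    using b unfolding P_def coeff_sum GF_vecs_def by (cases "e < m") (simp_all add: coeff_monom)
  then have "P \<noteq> 0" using nz by (metis coeff_0 ext zero_fun_def)
  have degP: "Polynomial.degree P \<le> m"
    unfolding P_def by (rule degree_sum_le) (auto intro: order.trans[OF degree_monom_le])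
  have roots: "{x. pow_comb x m b = 0} = {x. poly P x = 0}"
    unfolding P_def pow_comb_def by (simp add: poly_sum poly_monom)
  show "finite {x. pow_comb x m b = 0}" using roots poly_roots_finite[OF \<open>P \<noteq> 0\<close>] by simp
  show "card {x. pow_comb x m b = 0} \<le> m"
    using roots card_poly_roots_bound[OF \<open>P \<noteq> 0\<close>] degP by simp
qed

text \<open>Counting: the fewer than \<open>2^(cl)\<close> nonzero relations of length \<open>l\<close> have at most \<open>l\<close>
  roots each, too few to cover \<open>GF(2^(c(2l+1)))\<close> together with \<open>GF(2^c)\<close>.\<close>

lemma exists_indep_beta:
  assumes c: "c \<ge> 1" and l: "l \<ge> 1"
  shows "\<exists>\<beta>\<in>GF (c * (2 * l + 1)). powers_indep c \<beta> l \<and> \<beta> \<notin> GF c"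
proof -
  define Bad where "Bad = (\<Union>b\<in>GF_vecs c l - {0}. {x. pow_comb x l b = 0})"
  have finB: "finite (GF_vecs c l - {0})" using finite_GF_vecs[OF c] by simp
  have "card Bad \<le> (\<Sum>b\<in>GF_vecs c l - {0}. card {x. pow_comb x l b = 0})"
    unfolding Bad_def by (rule card_UN_le[OF finB])
  also have "\<dots> \<le> (\<Sum>b\<in>GF_vecs c l - {0}. l)"
    by (rule sum_mono) (use pow_comb_roots in auto)
  also have "\<dots> \<le> 2 ^ (c * l) * l"
    using card_GF_vecs[OF c] card_Diff1_le[of "GF_vecs c l" 0] by simp
  finally have card_Bad: "card Bad \<le> 2 ^ (c * l) * l" .
  have "l < 2 ^ l" by (rule less_exp)
  also have "\<dots> \<le> 2 ^ (c * l)" using c by (intro power_increasing) auto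
  finally have "l + 1 \<le> 2 ^ (c * l)" by simp
  have "card (Bad \<union> GF c) \<le> 2 ^ (c * l) * l + 2 ^ c"
    using card_Un_le[of Bad "GF c"] card_Bad GF_card[OF c] by simp
  also have "\<dots> \<le> 2 ^ (c * l) * (l + 1)"
    using power_increasing[of c "c * l" "2::nat"] l by simp
  also have "\<dots> \<le> 2 ^ (c * l) * 2 ^ (c * l)"
    by (rule mult_le_mono2[OF \<open>l + 1 \<le> 2 ^ (c * l)\<close>])
  also have "\<dots> < 2 ^ (c * l + c * l + c)"
    using c one_less_power[of "2::nat" c] by (simp add: power_add)
  also have "\<dots> = card (GF (c * (2 * l + 1)))"
    using GF_card[of "c * (2 * l + 1)"] c by (simp add: algebra_simps)
  finally have lt: "card (Bad \<union> GF c) < card (GF (c * (2 * l + 1)))" .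
  have "finite (Bad \<union> GF c)"
    unfolding Bad_def using finB pow_comb_roots(1) finite_GF[OF c] by blast
  then have "\<not> GF (c * (2 * l + 1)) \<subseteq> Bad \<union> GF c"
    using lt card_mono leD by blast
  then obtain \<beta> where \<beta>: "\<beta> \<in> GF (c * (2 * l + 1))" "\<beta> \<notin> Bad" "\<beta> \<notin> GF c" by blast
  have "powers_indep c \<beta> l"
    unfolding powers_indep_def
  proof (intro ballI impI allI)
    fix b e assume "b \<in> GF_vecs c l" "pow_comb \<beta> l b = 0"
    then have "b = 0" using \<beta>(2) unfolding Bad_def by blast
    then show "b e = 0" by simp
  qed
  then show ?thesis using \<beta> by blast
qed

lemma power_in_pow_comb_image:
  assumes indep_n: "powers_indep c \<beta> n" and dep: "\<not> powers_indep c \<beta> (Suc n)"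
  shows "\<beta> ^ n \<in> pow_comb \<beta> n ` GF_vecs c n"
proof -
  obtain b where b: "b \<in> GF_vecs c (Suc n)" "pow_comb \<beta> (Suc n) b = 0" and nz: "\<exists>e<Suc n. b e \<noteq> 0"
    using dep unfolding powers_indep_def by blast
  define b0 where "b0 e = (if e < n then b e else 0)" for e
  have b0: "b0 \<in> GF_vecs c n" using b(1) by (auto simp: GF_vecs_def b0_def)
  have "pow_comb \<beta> n b0 + b n * \<beta> ^ n = 0"
    using b(2) by (simp add: pow_comb_def b0_def)
  then have rel: "pow_comb \<beta> n b0 = b n * \<beta> ^ n"
    by (simp add: eq_neg_iff_add_eq_0[symmetric])
  have "b n \<noteq> 0"
  proof
    assume "b n = 0"
    then have "\<forall>e<n. b0 e = 0" using rel indep_n b0 unfolding powers_indep_def by auto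
    then show False using nz \<open>b n = 0\<close> by (auto simp: b0_def less_Suc_eq)
  qed
  have "(\<lambda>e. b0 e / b n) \<in> GF_vecs c n"
    using b0 b(1) by (auto simp: GF_vecs_def)
  moreover have "pow_comb \<beta> n (\<lambda>e. b0 e / b n) = \<beta> ^ n"
    using rel \<open>b n \<noteq> 0\<close> by (simp add: pow_comb_def sum_divide_distrib[symmetric])
  ultimately show ?thesis by force
qed

text \<open>The first linear relation among \<open>1, \<beta>, \<beta>^2, \<dots>\<close> over \<open>GF(2^c)\<close> expresses \<open>\<beta>^n\<close> through
  lower powers, so the span of \<open>1, \<dots>, \<beta>^(n-1)\<close> is closed under multiplication by \<open>\<beta>\<close>.\<close>

lemma exists_minimal_relation:
  assumes c: "c \<ge> 1" and M: "M \<ge> 1" and \<beta>: "\<beta> \<in> GF (c * M)" and indep_l: "powers_indep c \<beta> l"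
  shows "\<exists>n\<ge>l. n \<le> M \<and> powers_indep c \<beta> n \<and> \<beta> ^ n \<in> pow_comb \<beta> n ` GF_vecs c n"
proof -
  have "\<not> powers_indep c \<beta> (Suc M)" using powers_indep_le[OF c M \<beta>] by fastforce
  then obtain n where dep: "\<not> powers_indep c \<beta> (Suc n)"
    and indep_less: "\<forall>m<n. powers_indep c \<beta> (Suc m)"
    using exists_least_iff[of "\<lambda>m. \<not> powers_indep c \<beta> (Suc m)"] by blast
  have indep_n: "powers_indep c \<beta> n"
    using indep_less by (cases n) (auto simp: powers_indep_def)
  have "l \<le> n"
    using dep powers_indep_mono[OF _ indep_l, of "Suc n"] by (metis not_less_eq_eq)
  moreover have "n \<le> M" by (rule powers_indep_le[OF c M \<beta> indep_n])
  ultimately show ?thesis using indep_n power_in_pow_comb_image[OF indep_n dep] by blast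
qed

section \<open>The field generated by \<beta>\<close>

locale simple_extension =
  fixes c n :: nat and \<beta> :: gf2_closure
  assumes c1: "c \<ge> 1" and n1: "n \<ge> 1" and indep: "powers_indep c \<beta> n"
    and power_n: "\<beta> ^ n \<in> pow_comb \<beta> n ` GF_vecs c n"
begin

definition F where "F = pow_comb \<beta> n ` GF_vecs c n"

lemma finite_F: "finite F"
  unfolding F_def using finite_GF_vecs[OF c1] by simp

lemma card_F_le: "card F \<le> 2 ^ (c * n)"
  unfolding F_def by (metis card_GF_vecs[OF c1] card_image_le finite_GF_vecs[OF c1])

lemma F_0[simp]: "0 \<in> F"
proof -
  have "(\<lambda>e. 0) \<in> GF_vecs c n" by (simp add: GF_vecs_def)
  moreover have "pow_comb \<beta> n (\<lambda>e. 0) = 0" by (simp add: pow_comb_def)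
  ultimately show ?thesis unfolding F_def by (metis image_eqI)
qed

lemma F_add[simp]: "x \<in> F \<Longrightarrow> y \<in> F \<Longrightarrow> x + y \<in> F"
  unfolding F_def by (auto simp: pow_comb_add[symmetric] intro!: imageI GF_vecs_add)

lemma F_sum[simp]: "(\<And>i. i \<in> I \<Longrightarrow> f i \<in> F) \<Longrightarrow> sum f I \<in> F"
  by (induction I rule: infinite_finite_induct) auto

lemma F_scale:
  assumes s: "s \<in> GF c" and y: "y \<in> F"
  shows "s * y \<in> F"
proof -
  obtain b where b: "b \<in> GF_vecs c n" "y = pow_comb \<beta> n b" using y unfolding F_def by blast
  have "(\<lambda>e. s * b e) \<in> GF_vecs c n" using b s by (simp add: GF_vecs_def)
  moreover have "pow_comb \<beta> n (\<lambda>e. s * b e) = s * y"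
    using b by (simp add: pow_comb_def sum_distrib_left mult.assoc)
  ultimately show ?thesis unfolding F_def by (metis image_eqI)
qed

lemma GF_in_F: assumes s: "s \<in> GF c" shows "s \<in> F"
proof -
  have "(\<lambda>e. if e = 0 then s else 0) \<in> GF_vecs c n" using s n1 by (simp add: GF_vecs_def)
  moreover have "pow_comb \<beta> n (\<lambda>e. if e = 0 then s else 0) = (\<Sum>e<n. if e = 0 then s else 0)"
    unfolding pow_comb_def by (rule sum.cong) auto
  moreover have "(\<Sum>e<n. if e = 0 then s else 0) = s" using n1 by (simp add: sum.delta')
  ultimately show ?thesis unfolding F_def by (metis image_eqI)
qed

lemma F_1[simp]: "1 \<in> F"
  using GF_in_F[of 1] by simp

lemma F_times_beta:
  assumes y: "y \<in> F" shows "\<beta> * y \<in> F"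
proof -
  obtain b where b: "b \<in> GF_vecs c n" "y = pow_comb \<beta> n b" using y unfolding F_def by blast
  define shifted where "shifted e = (if e = 0 then 0 else b (e - 1))" for e
  define low where "low e = (if e < n then shifted e else 0)" for e
  have "\<beta> * y = (\<Sum>e<n. b e * \<beta> ^ Suc e)"
    using b by (simp add: pow_comb_def sum_distrib_left algebra_simps)
  also have "\<dots> = (\<Sum>e<Suc n. shifted e * \<beta> ^ e)"
    unfolding shifted_def by (subst sum.lessThan_Suc_shift) simp
  also have "\<dots> = pow_comb \<beta> n low + shifted n * \<beta> ^ n"
    unfolding pow_comb_def low_def by simp
  finally have "\<beta> * y = pow_comb \<beta> n low + shifted n * \<beta> ^ n" .
  moreover have "pow_comb \<beta> n low \<in> F"
    using b unfolding F_def low_def shifted_def GF_vecs_def by (intro imageI) auto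
  moreover have "shifted n * \<beta> ^ n \<in> F"
    using b n1 power_n by (intro F_scale) (auto simp: shifted_def GF_vecs_def F_def)
  ultimately show ?thesis by simp
qed

lemma F_mult[simp]:
  assumes x: "x \<in> F" and y: "y \<in> F" shows "x * y \<in> F"
proof -
  have powers: "\<beta> ^ e * y \<in> F" for e
    by (induction e) (use F_times_beta y in \<open>auto simp: mult.assoc\<close>)
  obtain b where b: "b \<in> GF_vecs c n" "x = pow_comb \<beta> n b" using x unfolding F_def by blast
  have "x * y = (\<Sum>e<n. b e * (\<beta> ^ e * y))"
    using b by (simp add: pow_comb_def sum_distrib_right mult.assoc)
  moreover have "b e * (\<beta> ^ e * y) \<in> F" if "e < n" for e
    using that b F_scale powers by (simp add: GF_vecs_def)
  ultimately show ?thesis by (auto intro!: F_sum)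
qed

lemma F_minus[simp]: "x \<in> F \<Longrightarrow> y \<in> F \<Longrightarrow> x - y \<in> F"
  by (simp add: minus_eq_add_char2)

lemma F_prod[simp]: "(\<And>i. i \<in> I \<Longrightarrow> f i \<in> F) \<Longrightarrow> prod f I \<in> F"
  by (induction I rule: infinite_finite_induct) auto

lemma F_power[simp]: "x \<in> F \<Longrightarrow> x ^ e \<in> F"
  by (induction e) auto

lemma beta_F[simp]: "\<beta> \<in> F"
  using F_times_beta[OF F_1] by simp

lemma F_inverse[simp]:
  assumes y: "y \<in> F" shows "inverse y \<in> F"
proof (cases "y = 0")
  case False
  have "(\<lambda>z. y * z) ` F = F"
    using y False by (intro endo_inj_surj[OF finite_F]) (auto intro: inj_onI)
  then obtain z where "z \<in> F" "y * z = 1" using F_1 by (metis imageE)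
  then show ?thesis using False by (metis inverse_unique)
qed simp

lemma F_divide[simp]: "x \<in> F \<Longrightarrow> y \<in> F \<Longrightarrow> x / y \<in> F"
  by (simp add: divide_inverse)

definition coords :: "gf2_closure \<Rightarrow> nat \<Rightarrow> gf2_closure" where
  "coords y = (THE b. b \<in> GF_vecs c n \<and> pow_comb \<beta> n b = y)"

lemma coords_pow_comb: "b \<in> GF_vecs c n \<Longrightarrow> coords (pow_comb \<beta> n b) = b"
  unfolding coords_def using pow_comb_inj[OF indep] by (intro the_equality) auto

lemma coords_F: "y \<in> F \<Longrightarrow> coords y \<in> GF_vecs c n"
  and pow_comb_coords: "y \<in> F \<Longrightarrow> pow_comb \<beta> n (coords y) = y"
  using coords_pow_comb unfolding F_def by auto

definition top_coord :: "gf2_closure \<Rightarrow> gf2_closure" where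
  "top_coord y = coords y (n - 1)"

lemma top_coord_GF: "y \<in> F \<Longrightarrow> top_coord y \<in> GF c"
  unfolding top_coord_def using coords_F n1 by (simp add: GF_vecs_def)

lemma top_coord_linear:
  assumes "\<And>j. j \<in> J \<Longrightarrow> s j \<in> GF c" and "\<And>j. j \<in> J \<Longrightarrow> y j \<in> F"
  shows "top_coord (\<Sum>j\<in>J. s j * y j) = (\<Sum>j\<in>J. s j * top_coord (y j))"
proof -
  define b where "b e = (\<Sum>j\<in>J. s j * coords (y j) e)" for e
  have b: "b \<in> GF_vecs c n"
    using coords_F assms unfolding b_def GF_vecs_def by auto
  have "pow_comb \<beta> n b = (\<Sum>j\<in>J. s j * pow_comb \<beta> n (coords (y j)))"
    unfolding b_def pow_comb_def
    by (simp add: sum_distrib_right sum_distrib_left mult.assoc sum.swap[of _ J])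
  also have "\<dots> = (\<Sum>j\<in>J. s j * y j)" using pow_comb_coords assms(2) by simp
  finally have "coords (\<Sum>j\<in>J. s j * y j) = b" using coords_pow_comb[OF b] by simp
  then show ?thesis unfolding top_coord_def b_def by simp
qed

lemma top_coord_power:
  assumes e: "e < n" shows "top_coord (\<beta> ^ e) = (if e = n - 1 then 1 else 0)"
proof -
  define b :: "nat \<Rightarrow> gf2_closure" where "b e' = (if e' = e then 1 else 0)" for e'
  have b: "b \<in> GF_vecs c n" using e unfolding b_def GF_vecs_def by auto
  have "pow_comb \<beta> n b = (\<Sum>e'<n. if e' = e then \<beta> ^ e else 0)"
    unfolding pow_comb_def b_def by (rule sum.cong) auto
  also have "\<dots> = \<beta> ^ e" using e by (simp add: sum.delta')
  finally have "pow_comb \<beta> n b = \<beta> ^ e" .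
  then have "coords (\<beta> ^ e) = b" using coords_pow_comb[OF b] by simp
  then show ?thesis unfolding top_coord_def b_def by simp
qed

end
section \<open>Lagrange interpolation\<close>

definition lagrange_poly :: "'b set \<Rightarrow> ('b \<Rightarrow> 'a::field) \<Rightarrow> ('b \<Rightarrow> 'a) \<Rightarrow> 'a poly" where
  "lagrange_poly S \<gamma> y = (\<Sum>j\<in>S. Polynomial.smult (y j) (\<Prod>l\<in>S-{j}. [:- \<gamma> l / (\<gamma> j - \<gamma> l), 1 / (\<gamma> j - \<gamma> l):]))"

lemma poly_lagrange_poly_expand:
  "poly (lagrange_poly S \<gamma> y) x = (\<Sum>j\<in>S. y j * (\<Prod>l\<in>S-{j}. (x - \<gamma> l) / (\<gamma> j - \<gamma> l)))"
proof -
  have factor: "poly [:- a / d, 1 / d:] x = (x - a) / d" for a d :: 'a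
    by (simp add: diff_divide_distrib)
  show ?thesis
    unfolding lagrange_poly_def poly_sum poly_smult poly_prod by (simp only: factor)
qed

lemma poly_lagrange_poly:
  assumes fin: "finite S" and inj: "inj_on \<gamma> S" and i: "i \<in> S"
  shows "poly (lagrange_poly S \<gamma> y) (\<gamma> i) = y i"
proof -
  have "poly (lagrange_poly S \<gamma> y) (\<gamma> i) = (\<Sum>j\<in>S. y j * (\<Prod>l\<in>S-{j}. (\<gamma> i - \<gamma> l) / (\<gamma> j - \<gamma> l)))"
    by (rule poly_lagrange_poly_expand)
  also have "\<dots> = (\<Sum>j\<in>S. if j = i then y j else 0)"
  proof (rule sum.cong[OF refl])
    fix j assume j: "j \<in> S"
    show "y j * (\<Prod>l\<in>S-{j}. (\<gamma> i - \<gamma> l) / (\<gamma> j - \<gamma> l)) = (if j = i then y j else 0)"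
    proof (cases "j = i")
      case True
      have "(\<Prod>l\<in>S-{j}. (\<gamma> i - \<gamma> l) / (\<gamma> j - \<gamma> l)) = (\<Prod>l\<in>S-{j}. 1)"
      proof (rule prod.cong[OF refl])
        fix l assume l: "l \<in> S - {j}"
        then have "\<gamma> j \<noteq> \<gamma> l" using inj j by (metis DiffE inj_on_def singletonI)
        then show "(\<gamma> i - \<gamma> l) / (\<gamma> j - \<gamma> l) = 1" using True by simp
      qed
      then show ?thesis using True by simp
    next
      case False
      have "(\<Prod>l\<in>S-{j}. (\<gamma> i - \<gamma> l) / (\<gamma> j - \<gamma> l)) = 0"
        using fin i False by (intro prod_zero) auto
      then show ?thesis using False by simp
    qed
  qed
  also have "\<dots> = y i" using fin i by (simp add: sum.delta')
  finally show ?thesis .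
qed

lemma degree_lagrange_poly:
  assumes fin: "finite S"
  shows "Polynomial.degree (lagrange_poly S \<gamma> y) \<le> card S - 1"
proof -
  define fac where "fac j l = [:- \<gamma> l / (\<gamma> j - \<gamma> l), 1 / (\<gamma> j - \<gamma> l):]" for j l
  have lagr_eq: "lagrange_poly S \<gamma> y = (\<Sum>j\<in>S. Polynomial.smult (y j) (\<Prod>l\<in>S-{j}. fac j l))"
    unfolding lagrange_poly_def fac_def ..
  have dfac: "Polynomial.degree (fac j l) \<le> 1" for j l
    unfolding fac_def by (rule order.trans[OF degree_pCons_le]) simp
  have "Polynomial.degree (Polynomial.smult (y j) (\<Prod>l\<in>S-{j}. fac j l)) \<le> card S - 1"
    if j: "j \<in> S" for j
  proof -
    have "Polynomial.degree (\<Prod>l\<in>S-{j}. fac j l) \<le> (\<Sum>l\<in>S-{j}. Polynomial.degree (fac j l))"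
      using degree_prod_sum_le[of "S-{j}" "fac j"] fin by (simp add: o_def)
    also have "\<dots> \<le> (\<Sum>l\<in>S-{j}. 1)"
      by (rule sum_mono) (rule dfac)
    also have "\<dots> = card S - 1" using fin j by simp
    finally show ?thesis using degree_smult_le order.trans by blast
  qed
  then show ?thesis unfolding lagr_eq by (intro degree_sum_le[OF fin])
qed

lemma lagrange_interpolation:
  fixes h :: "'a::field poly"
  assumes fin: "finite S" and inj: "inj_on \<gamma> S" and deg: "Polynomial.degree h < card S"
  shows "poly h x = (\<Sum>j\<in>S. poly h (\<gamma> j) * (\<Prod>l\<in>S-{j}. (x - \<gamma> l) / (\<gamma> j - \<gamma> l)))"
proof -
  have cardS: "card (\<gamma> ` S) = card S" using card_image[OF inj] .
  have "h = lagrange_poly S \<gamma> (\<lambda>j. poly h (\<gamma> j))"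
  proof (rule poly_eqI_degree[of "\<gamma> ` S"])
    fix z assume "z \<in> \<gamma> ` S"
    then obtain i where "i \<in> S" "z = \<gamma> i" by blast
    then show "poly h z = poly (lagrange_poly S \<gamma> (\<lambda>j. poly h (\<gamma> j))) z"
      using poly_lagrange_poly[OF fin inj] by simp
  next
    show "Polynomial.degree h < card (\<gamma> ` S)" using deg cardS by simp
  next
    have "Polynomial.degree (lagrange_poly S \<gamma> (\<lambda>j. poly h (\<gamma> j))) \<le> card S - 1" by (rule degree_lagrange_poly[OF fin])
    then show "Polynomial.degree (lagrange_poly S \<gamma> (\<lambda>j. poly h (\<gamma> j))) < card (\<gamma> ` S)"
      using deg cardS by linarith
  qed
  then have "poly h x = poly (lagrange_poly S \<gamma> (\<lambda>j. poly h (\<gamma> j))) x" by simp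
  also have "\<dots> = (\<Sum>j\<in>S. poly h (\<gamma> j) * (\<Prod>l\<in>S-{j}. (x - \<gamma> l) / (\<gamma> j - \<gamma> l)))"
    by (rule poly_lagrange_poly_expand)
  finally show ?thesis .
qed

lemma map_pmf_of_set_fibers:
  assumes finA: "finite A" and neA: "A \<noteq> {}" and finC: "finite C"
    and img: "g ` A \<subseteq> C" and fib: "\<And>c. c \<in> C \<Longrightarrow> card {x\<in>A. g x = c} = \<kappa>"
  shows "map_pmf g (pmf_of_set A) = pmf_of_set C"
proof -
  have neC: "C \<noteq> {}" using img neA by blast
  have A_eq: "A = (\<Union>c\<in>C. {x\<in>A. g x = c})" using img by auto
  have "card A = (\<Sum>c\<in>C. card {x\<in>A. g x = c})"
    by (subst A_eq, rule card_UN_disjoint) (use finC finA in auto)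
  also have "\<dots> = \<kappa> * card C" using fib by simp
  finally have cA: "card A = \<kappa> * card C" .
  have cApos: "card A > 0" using finA neA by (simp add: card_gt_0_iff)
  show ?thesis
  proof (rule pmf_eqI)
    fix c
    have "pmf (map_pmf g (pmf_of_set A)) c = measure (pmf_of_set A) (g -` {c})"
      by (simp add: pmf_map)
    also have "\<dots> = real (card (g -` {c} \<inter> A)) / real (card A)"
      using finA neA by (simp add: measure_pmf_of_set Int_commute)
    also have "g -` {c} \<inter> A = {x\<in>A. g x = c}" by auto
    finally have eq: "pmf (map_pmf g (pmf_of_set A)) c = real (card {x\<in>A. g x = c}) / real (card A)" .
    show "pmf (map_pmf g (pmf_of_set A)) c = pmf (pmf_of_set C) c"
    proof (cases "c \<in> C")
      case True
      have "\<kappa> > 0" using cA cApos by (cases \<kappa>) auto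
      then show ?thesis using eq True fib[OF True] cA neC finC by (simp add: pmf_of_set)
    next
      case False
      then have "{x\<in>A. g x = c} = {}" using img by auto
      then have "card {x\<in>A. g x = c} = 0" by (metis card.empty)
      then have "pmf (map_pmf g (pmf_of_set A)) c = 0" using eq by simp
      then show ?thesis using False neC finC by (simp add: pmf_of_set)
    qed
  qed
qed

lemma card_fibers_eq_affine:
  fixes g :: "'a::ab_group_add \<Rightarrow> 'b::ab_group_add"
  assumes closed: "\<And>x y z. x \<in> A \<Longrightarrow> y \<in> A \<Longrightarrow> z \<in> A \<Longrightarrow> x + y - z \<in> A"
    and affine: "\<And>x y z. g (x + y - z) = g x + g y - g z"
    and c: "c \<in> g ` A" and c': "c' \<in> g ` A"
  shows "card {x\<in>A. g x = c} = card {x\<in>A. g x = c'}"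
proof -
  obtain a where a: "a \<in> A" "g a = c" using c by blast
  obtain a' where a': "a' \<in> A" "g a' = c'" using c' by blast
  have "bij_betw (\<lambda>x. x + a' - a) {x\<in>A. g x = c} {x\<in>A. g x = c'}"
    by (rule bij_betwI[where g = "\<lambda>x. x + a - a'"]) (use a a' closed affine in auto)
  then show ?thesis by (rule bij_betw_same_card)
qed

lemma
  shows card_bool_lists: "card {xs::bool list. length xs = L} = 2 ^ L"
    and finite_bool_lists: "finite {xs::bool list. length xs = L}"
  using card_lists_length_eq[of "UNIV :: bool set" L] finite_lists_length_eq[of "UNIV :: bool set" L]
  by simp_all

lemma exists_encoding:
  assumes fin: "finite S" and card: "card S \<le> 2 ^ L"
  shows "\<exists>enc :: 'a \<Rightarrow> bool list. inj_on enc S \<and> (\<forall>x. length (enc x) = L)"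
proof -
  obtain f where f: "f ` S \<subseteq> {xs::bool list. length xs = L}" "inj_on f S"
    using card_le_inj[OF fin finite_bool_lists] card card_bool_lists by metis
  define enc where "enc x = (if x \<in> S then f x else replicate L False)" for x
  have "inj_on enc S" using f(2) unfolding enc_def inj_on_def by auto
  moreover have "\<forall>x. length (enc x) = L" using f(1) unfolding enc_def by auto
  ultimately show ?thesis by blast
qed

lemma exists_bij_encoding:
  assumes fin: "finite S" and card: "card S = 2 ^ L"
  shows "\<exists>enc :: 'a \<Rightarrow> bool list. inj_on enc S \<and> (\<forall>x. length (enc x) = L)
           \<and> enc ` S = {xs. length xs = L}"
proof -
  obtain enc :: "'a \<Rightarrow> bool list" where enc: "inj_on enc S" "\<forall>x. length (enc x) = L"
    using exists_encoding[OF fin] card by auto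
  have "enc ` S = {xs. length xs = L}"
  proof (rule card_subset_eq[OF finite_bool_lists])
    show "enc ` S \<subseteq> {xs. length xs = L}" using enc(2) by auto
    show "card (enc ` S) = card {xs::bool list. length xs = L}"
      using card_image[OF enc(1)] card card_bool_lists by simp
  qed
  then show ?thesis using enc by blast
qed

lemma length_concat_const:
  assumes "\<forall>x\<in>set xs. length x = c"
  shows "length (concat xs) = length xs * c"
  using assms by (induction xs) auto

lemma take_drop_concat_const:
  assumes "\<forall>x\<in>set xs. length x = c" "u < length xs"
  shows "take c (drop (u * c) (concat xs)) = xs ! u"
  using assms
proof (induction xs arbitrary: u)
  case (Cons x xs)
  then show ?case by (cases u) simp_all
qed simp

lemma concat_blocks:
  assumes "length xs = n * c"
  shows "concat (map (\<lambda>i. take c (drop (i * c) xs)) [0..<n]) = xs"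
  using assms
proof (induction n arbitrary: xs)
  case (Suc n)
  have "map (\<lambda>i. take c (drop (i * c) xs)) [0..<Suc n]
        = take c xs # map (\<lambda>i. take c (drop (i * c) (drop c xs))) [0..<n]"
    by (simp add: upt_conv_Cons map_Suc_upt[symmetric] del: upt_Suc) (simp add: add.commute)
  moreover have "length (drop c xs) = n * c" using Suc.prems by simp
  ultimately show ?case using Suc.IH[of "drop c xs"] by simp
qed simp

definition digit :: "nat \<Rightarrow> nat \<Rightarrow> nat \<Rightarrow> nat" where
  "digit b q i = i div b ^ q mod b"

lemma digit_less: "b > 0 \<Longrightarrow> digit b q i < b"
  by (simp add: digit_def)

lemma digits_inj:
  assumes "b > 0" "i < b ^ d" "i' < b ^ d" "\<forall>q<d. digit b q i = digit b q i'"
  shows "i = i'"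
  using assms(2-)
proof (induction d arbitrary: i i')
  case (Suc d)
  have "i mod b = i' mod b" using Suc.prems(3)[rule_format, of 0] by (simp add: digit_def)
  moreover have "i div b = i' div b"
  proof (rule Suc.IH)
    show "i div b < b ^ d" "i' div b < b ^ d"
      using Suc.prems(1,2) assms(1) by (simp_all add: less_mult_imp_div_less mult.commute)
    have "digit b (Suc q) j = digit b q (j div b)" for q j
      by (simp add: digit_def div_mult2_eq)
    then show "\<forall>q<d. digit b q (i div b) = digit b q (i' div b)"
      using Suc.prems(3) by auto
  qed
  ultimately show ?case by (metis div_mult_mod_eq)
qed simp

lemma poly_eq_sum_coeffs:
  fixes p :: "'a::comm_semiring_1 poly"
  assumes "Polynomial.degree p < t"
  shows "poly p x = (\<Sum>r<t. poly.coeff p r * x ^ r)"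
proof -
  have "poly p x = (\<Sum>r\<le>Polynomial.degree p. poly.coeff p r * x ^ r)" by (rule Polynomial.poly_altdef)
  also have "\<dots> = (\<Sum>r<t. poly.coeff p r * x ^ r)"
    using assms by (intro sum.mono_neutral_left) (auto simp: coeff_eq_0)
  finally show ?thesis .
qed

context simple_extension begin

definition poly_in_F :: "gf2_closure poly \<Rightarrow> bool" where
  "poly_in_F p \<longleftrightarrow> (\<forall>e. poly.coeff p e \<in> F)"

lemma poly_in_F_0[simp]: "poly_in_F 0"
  by (simp add: poly_in_F_def)

lemma poly_in_F_pCons[simp]: "a \<in> F \<Longrightarrow> poly_in_F p \<Longrightarrow> poly_in_F (pCons a p)"
  by (auto simp: poly_in_F_def coeff_pCons split: nat.split)

lemma poly_in_F_1[simp]: "poly_in_F 1"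
  by (simp add: one_pCons)

lemma poly_in_F_add[simp]: "poly_in_F p \<Longrightarrow> poly_in_F q \<Longrightarrow> poly_in_F (p + q)"
  by (simp add: poly_in_F_def)

lemma poly_in_F_mult[simp]: "poly_in_F p \<Longrightarrow> poly_in_F q \<Longrightarrow> poly_in_F (p * q)"
  unfolding poly_in_F_def coeff_mult by (auto intro!: F_sum)

lemma poly_in_F_smult[simp]: "a \<in> F \<Longrightarrow> poly_in_F p \<Longrightarrow> poly_in_F (Polynomial.smult a p)"
  by (simp add: poly_in_F_def)

lemma poly_in_F_sum[simp]: "(\<And>i. i \<in> I \<Longrightarrow> poly_in_F (f i)) \<Longrightarrow> poly_in_F (sum f I)"
  by (induction I rule: infinite_finite_induct) auto

lemma poly_in_F_prod[simp]: "(\<And>i. i \<in> I \<Longrightarrow> poly_in_F (f i)) \<Longrightarrow> poly_in_F (prod f I)"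
  by (induction I rule: infinite_finite_induct) auto

lemma poly_in_F_lagrange_poly:
  assumes "\<And>j. j \<in> S \<Longrightarrow> \<gamma> j \<in> F" "\<And>j. j \<in> S \<Longrightarrow> y j \<in> F"
  shows "poly_in_F (lagrange_poly S \<gamma> y)"
  unfolding lagrange_poly_def using assms
  by (auto intro!: poly_in_F_sum poly_in_F_smult poly_in_F_prod poly_in_F_pCons)

end

definition funs_on :: "'x set \<Rightarrow> 'a::zero set \<Rightarrow> ('x \<Rightarrow> 'a) set" where
  "funs_on E S = {V. (\<forall>p\<in>E. V p \<in> S) \<and> (\<forall>p. p \<notin> E \<longrightarrow> V p = 0)}"

lemma finite_funs_on:
  assumes "finite E" "finite S"
  shows "finite (funs_on E S)"
proof -
  have "funs_on E S \<subseteq> (\<lambda>f x. if x \<in> E then f x else 0) ` PiE E (\<lambda>_. S)"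
  proof
    fix V assume V: "V \<in> funs_on E S"
    have "restrict V E \<in> PiE E (\<lambda>_. S)" using V by (auto simp: funs_on_def)
    moreover have "V = (\<lambda>x. if x \<in> E then restrict V E x else 0)"
      using V by (auto simp: funs_on_def fun_eq_iff)
    ultimately show "V \<in> (\<lambda>f x. if x \<in> E then f x else 0) ` PiE E (\<lambda>_. S)" by blast
  qed
  moreover have "finite (PiE E (\<lambda>_. S))" using assms by (simp add: finite_PiE)
  ultimately show ?thesis using finite_subset by blast
qed

lemma zero_funs_on: "0 \<in> S \<Longrightarrow> 0 \<in> funs_on E S"
  by (simp add: funs_on_def)

lemma funs_on_affine_closed:
  fixes S :: "'a::ab_group_add set"
  assumes "\<And>x y z. x \<in> S \<Longrightarrow> y \<in> S \<Longrightarrow> z \<in> S \<Longrightarrow> x + y - z \<in> S"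
  shows "R \<in> funs_on E S \<Longrightarrow> R' \<in> funs_on E S \<Longrightarrow> R'' \<in> funs_on E S \<Longrightarrow> R + R' - R'' \<in> funs_on E S"
  using assms by (simp add: funs_on_def)

section \<open>The protocol\<close>

locale pir_construction = simple_extension c n \<beta> for c n \<beta> +
  fixes k d t w N radix l LF :: nat and \<alpha> :: "nat \<Rightarrow> gf2_closure"
    and enc_sym enc_F :: "gf2_closure \<Rightarrow> bool list"
  assumes k_eq: "k = d * t + l" and l1: "l \<ge> 1" and l_le_n: "l \<le> n" and t1: "t \<ge> 1"
    and \<alpha>_GF: "\<And>j. j < k \<Longrightarrow> \<alpha> j \<in> GF c" and inj_\<alpha>: "inj_on \<alpha> {..<k}"
    and \<beta>_notin_GF: "\<beta> \<notin> GF c"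
    and radix_pos: "radix > 0" and N_le: "N \<le> radix ^ d"
    and inj_enc_sym: "inj_on enc_sym (GF c)" and length_enc_sym: "\<And>x. length (enc_sym x) = c"
    and enc_sym_image: "enc_sym ` GF c = {xs. length xs = c}"
    and inj_enc_F: "inj_on enc_F F" and length_enc_F: "\<And>x. length (enc_F x) = LF"
begin

definition query_len where
  "query_len = d * radix"

text \<open>Coordinate \<open>q * radix + e\<close> of the query is the indicator of "digit \<open>q\<close> of \<open>i\<close> is \<open>e\<close>".\<close>

definition query :: "nat \<Rightarrow> nat \<Rightarrow> gf2_closure" where
  "query i a = (if a mod radix = digit radix (a div radix) i then 1 else 0)"

definition share :: "(nat \<times> nat \<Rightarrow> gf2_closure) \<Rightarrow> nat \<Rightarrow> nat \<Rightarrow> nat \<Rightarrow> gf2_closure" where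
  "share R i j a = query i a + (\<Sum>r<t. R (r, a) * (\<alpha> j - \<beta>) ^ Suc r)"

definition randomness where
  "randomness = funs_on ({..<t} \<times> {..<query_len}) F"

definition enc_share :: "(nat \<Rightarrow> gf2_closure) \<Rightarrow> bool list" where
  "enc_share v = concat (map (\<lambda>a. enc_F (v a)) [0..<query_len])"

definition Share :: "nat \<Rightarrow> bool list list pmf" where
  "Share i = map_pmf (\<lambda>R. map (\<lambda>j. enc_share (share R i j)) [0..<k]) (pmf_of_set randomness)"

lemma query_F[simp]: "query i a \<in> F"
  by (simp add: query_def)

lemma \<alpha>_F[simp]: "j < k \<Longrightarrow> \<alpha> j \<in> F"
  using \<alpha>_GF GF_in_F by blast

lemma \<alpha>_minus_\<beta>_nonzero: "j < k \<Longrightarrow> \<alpha> j - \<beta> \<noteq> 0"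
  using \<alpha>_GF \<beta>_notin_GF by force

lemma finite_randomness: "finite randomness"
  unfolding randomness_def by (rule finite_funs_on) (auto simp: finite_F)

lemma zero_randomness: "0 \<in> randomness"
  unfolding randomness_def by (rule zero_funs_on) simp

lemma set_pmf_Share: "set_pmf (Share i) = (\<lambda>R. map (\<lambda>j. enc_share (share R i j)) [0..<k]) ` randomness"
  unfolding Share_def using finite_randomness zero_randomness by (subst set_map_pmf, subst set_pmf_of_set) auto

lemma share_F:
  assumes "R \<in> randomness" "j < k"
  shows "share R i j a \<in> F"
proof -
  have "R (r, a) \<in> F" for r
    using assms(1) by (cases "r < t \<and> a < query_len") (auto simp: randomness_def funs_on_def)
  then show ?thesis unfolding share_def using assms(2) by (auto intro!: F_sum)
qed

lemma enc_share_cong: "(\<And>a. a < query_len \<Longrightarrow> v a = v' a) \<Longrightarrow> enc_share v = enc_share v'"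
  unfolding enc_share_def by (intro arg_cong[where f = concat] map_cong) auto

lemma length_enc_share: "length (enc_share v) = query_len * LF"
  unfolding enc_share_def by (subst length_concat_const) (auto simp: length_enc_F)

subsection \<open>Privacy\<close>

definition view :: "nat set \<Rightarrow> nat \<Rightarrow> (nat \<times> nat \<Rightarrow> gf2_closure) \<Rightarrow> (nat \<times> nat \<Rightarrow> gf2_closure)" where
  "view T i R p = (if fst p \<in> T \<and> snd p < query_len then share R i (fst p) (snd p) else 0)"

lemma view_affine: "view T i (R + R' - R'') = view T i R + view T i R' - view T i R''"
proof -
  have "x + (a + a' - a'') = (x + a) + (x + a') - (x + a'')" for x a a' a'' :: gf2_closure
    by (simp add: algebra_simps del: add_self_char2 uminus_char2)
  then show ?thesis
    by (intro ext) (simp add: view_def share_def sum.distrib sum_subtractf algebra_simps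
        del: add_self_char2 uminus_char2)
qed

lemma view_in_funs_on:
  assumes "T \<subseteq> {..<k}" "R \<in> randomness"
  shows "view T i R \<in> funs_on (T \<times> {..<query_len}) F"
  using assms share_F by (auto simp: funs_on_def view_def)

text \<open>Any \<open>t\<close> servers can be shown any view: interpolate the noise polynomial of each coordinate
  through the prescribed values at the points \<open>\<alpha>\<^sub>j - \<beta>\<close>.\<close>

lemma view_surj:
  assumes T: "T \<subseteq> {..<k}" and card_T: "card T \<le> t" and V: "V \<in> funs_on (T \<times> {..<query_len}) F"
  shows "V \<in> view T i ` randomness"
proof -
  have finite_T: "finite T" using T finite_subset by blast
  define \<gamma> where "\<gamma> j = \<alpha> j - \<beta>" for j
  define P where "P a = lagrange_poly T \<gamma> (\<lambda>j. (V (j, a) - query i a) / \<gamma> j)" for a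
  define R where "R p = (if fst p < t \<and> snd p < query_len then poly.coeff (P (snd p)) (fst p) else 0)" for p
  have \<gamma>_nonzero: "\<gamma> j \<noteq> 0" if "j \<in> T" for j
    using that T \<alpha>_minus_\<beta>_nonzero unfolding \<gamma>_def by auto
  have inj_\<gamma>: "inj_on \<gamma> T"
    using T inj_\<alpha> unfolding \<gamma>_def by (auto simp: inj_on_def)
  have "poly_in_F (P a)" if "a < query_len" for a
    unfolding P_def using that T V by (intro poly_in_F_lagrange_poly) (auto simp: \<gamma>_def funs_on_def)
  then have R: "R \<in> randomness"
    unfolding randomness_def funs_on_def R_def by (auto simp: poly_in_F_def)
  have degree_P: "Polynomial.degree (P a) < t" for a
  proof -
    have "Polynomial.degree (P a) \<le> card T - 1"
      unfolding P_def by (rule degree_lagrange_poly[OF finite_T])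
    then show ?thesis using card_T t1 by linarith
  qed
  have noise: "(\<Sum>r<t. R (r, a) * (\<alpha> j - \<beta>) ^ Suc r) = V (j, a) - query i a"
    if "j \<in> T" "a < query_len" for j a
  proof -
    have "(\<Sum>r<t. R (r, a) * (\<alpha> j - \<beta>) ^ Suc r) = \<gamma> j * (\<Sum>r<t. poly.coeff (P a) r * \<gamma> j ^ r)"
      using that unfolding R_def \<gamma>_def by (simp add: sum_distrib_left algebra_simps)
    also have "(\<Sum>r<t. poly.coeff (P a) r * \<gamma> j ^ r) = poly (P a) (\<gamma> j)"
      by (rule poly_eq_sum_coeffs[OF degree_P, symmetric])
    also have "\<dots> = (V (j, a) - query i a) / \<gamma> j"
      unfolding P_def using that by (intro poly_lagrange_poly[OF finite_T inj_\<gamma>])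
    finally show ?thesis using \<gamma>_nonzero that by simp
  qed
  have "view T i R = V"
    using V noise by (auto simp: view_def share_def funs_on_def fun_eq_iff)
  then show ?thesis using R by blast
qed

lemma view_uniform:
  assumes T: "T \<subseteq> {..<k}" and card_T: "card T \<le> t"
  shows "map_pmf (view T i) (pmf_of_set randomness) = pmf_of_set (funs_on (T \<times> {..<query_len}) F)"
proof (rule map_pmf_of_set_fibers)
  show "finite randomness" "randomness \<noteq> {}" using finite_randomness zero_randomness by auto
  show "finite (funs_on (T \<times> {..<query_len}) F)"
    using T finite_subset by (intro finite_funs_on) (auto simp: finite_F)
  show "view T i ` randomness \<subseteq> funs_on (T \<times> {..<query_len}) F"
    using view_in_funs_on[OF T] by blast
  fix V assume V: "V \<in> funs_on (T \<times> {..<query_len}) F"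
  have closed: "R + R' - R'' \<in> randomness"
    if "R \<in> randomness" "R' \<in> randomness" "R'' \<in> randomness" for R R' R''
    using that unfolding randomness_def by (intro funs_on_affine_closed) auto
  show "card {R \<in> randomness. view T i R = V} = card {R \<in> randomness. view T i R = 0}"
    using card_fibers_eq_affine[OF closed view_affine view_surj[OF T card_T V]
        view_surj[OF T card_T zero_funs_on]] by simp
qed

lemma Share_restrict_uniform:
  assumes T: "T \<subseteq> {..<k}" and card_T: "card T \<le> t"
  shows "map_pmf (\<lambda>s. map (\<lambda>j. s ! j) (sorted_list_of_set T)) (Share i)
       = map_pmf (\<lambda>V. map (\<lambda>j. enc_share (\<lambda>a. V (j, a))) (sorted_list_of_set T))
           (pmf_of_set (funs_on (T \<times> {..<query_len}) F))"
proof -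
  have finite_T: "finite T" using T finite_subset by blast
  have "map_pmf (\<lambda>s. map (\<lambda>j. s ! j) (sorted_list_of_set T)) (Share i)
      = map_pmf (\<lambda>V. map (\<lambda>j. enc_share (\<lambda>a. V (j, a))) (sorted_list_of_set T))
          (map_pmf (view T i) (pmf_of_set randomness))"
    unfolding Share_def map_pmf_comp
    using T finite_T by (intro map_pmf_cong refl map_cong) (auto simp: view_def subset_iff intro!: enc_share_cong)
  then show ?thesis using view_uniform[OF T card_T] by simp
qed

definition dec_sym :: "bool list \<Rightarrow> gf2_closure" where
  "dec_sym xs = (if length xs = c then inv_into (GF c) enc_sym xs else 0)"

definition dec_share :: "bool list \<Rightarrow> nat \<Rightarrow> gf2_closure" where
  "dec_share s a = inv_into F enc_F (take LF (drop (a * LF) s))"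

definition record_block :: "bool list \<Rightarrow> nat \<Rightarrow> nat \<Rightarrow> bool list" where
  "record_block r u q = take c (drop ((u * l + q) * c) r)"

definition block_vec :: "bool list \<Rightarrow> nat \<Rightarrow> nat \<Rightarrow> gf2_closure" where
  "block_vec r u q = (if q < l then dec_sym (record_block r u q) else 0)"

text \<open>Symbol \<open>q\<close> is paired with \<open>\<beta>^(n-1-q)\<close> so that the probes below are unitriangular.\<close>

definition block_elem :: "bool list \<Rightarrow> nat \<Rightarrow> gf2_closure" where
  "block_elem r u = (\<Sum>q<l. block_vec r u q * \<beta> ^ (n - 1 - q))"

definition query_index :: "nat \<Rightarrow> nat \<Rightarrow> nat" where
  "query_index q i' = q * radix + digit radix q i'"

definition eval_db_poly :: "bool list list \<Rightarrow> nat \<Rightarrow> (nat \<Rightarrow> gf2_closure) \<Rightarrow> gf2_closure" where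
  "eval_db_poly db u x = (\<Sum>i'<N. block_elem (db ! i') u * (\<Prod>q<d. x (query_index q i')))"

definition lagrange_weight :: "nat \<Rightarrow> gf2_closure" where
  "lagrange_weight j = (\<Prod>j'\<in>{..<k}-{j}. (\<beta> - \<alpha> j') / (\<alpha> j - \<alpha> j'))"

definition answer :: "bool list list \<Rightarrow> nat \<Rightarrow> (nat \<Rightarrow> gf2_closure) \<Rightarrow> nat \<Rightarrow> gf2_closure" where
  "answer db j v u = top_coord (lagrange_weight j * eval_db_poly db u v)"

definition Eval :: "bool list list \<Rightarrow> nat \<Rightarrow> bool list \<Rightarrow> bool list" where
  "Eval db j s = concat (map (\<lambda>u. enc_sym (answer db j (dec_share s) u)) [0..<w])"

lemma dec_sym_GF[simp]: "dec_sym xs \<in> GF c"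
  unfolding dec_sym_def using enc_sym_image by (auto intro: inv_into_into)

lemma dec_sym_enc_sym[simp]: "x \<in> GF c \<Longrightarrow> dec_sym (enc_sym x) = x"
  unfolding dec_sym_def using length_enc_sym inj_enc_sym by (simp add: inv_into_f_f)

lemma enc_sym_dec_sym: "length xs = c \<Longrightarrow> enc_sym (dec_sym xs) = xs"
  unfolding dec_sym_def using enc_sym_image by (simp add: f_inv_into_f)

lemma length_Eval: "length (Eval db j s) = w * c"
  unfolding Eval_def by (subst length_concat_const) (auto simp: length_enc_sym)

lemma block_vec_GF_vecs: "block_vec r u \<in> GF_vecs c l"
  unfolding block_vec_def GF_vecs_def by auto

lemma block_elem_F: "block_elem r u \<in> F"
  unfolding block_elem_def by (intro F_sum F_mult F_power beta_F GF_in_F) (simp add: block_vec_def)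

lemma query_index_less: "q < d \<Longrightarrow> query_index q i' < query_len"
proof -
  assume q: "q < d"
  have "query_index q i' < Suc q * radix"
    unfolding query_index_def using digit_less[OF radix_pos] by simp
  also have "\<dots> \<le> d * radix" using q by (intro mult_right_mono) auto
  finally show ?thesis unfolding query_len_def .
qed

lemma eval_db_poly_F: "(\<And>a. a < query_len \<Longrightarrow> x a \<in> F) \<Longrightarrow> eval_db_poly db u x \<in> F"
  unfolding eval_db_poly_def using query_index_less block_elem_F by (auto intro!: F_sum F_prod F_mult)

lemma answer_GF:
  assumes "R \<in> randomness" "j < k"
  shows "answer db j (share R i j) u \<in> GF c"
  unfolding answer_def lagrange_weight_def using assms share_F
  by (intro top_coord_GF F_mult eval_db_poly_F) (auto intro!: F_prod)

lemma Eval_enc_share: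
  assumes R: "R \<in> randomness" and j: "j < k"
  shows "Eval db j (enc_share (share R i j)) = concat (map (\<lambda>u. enc_sym (answer db j (share R i j) u)) [0..<w])"
proof -
  have "dec_share (enc_share (share R i j)) a = share R i j a" if "a < query_len" for a
  proof -
    have "take LF (drop (a * LF) (enc_share (share R i j))) = enc_F (share R i j a)"
      unfolding enc_share_def using that length_enc_F by (subst take_drop_concat_const) auto
    then show ?thesis
      unfolding dec_share_def using inj_enc_F share_F[OF R j] by (simp add: inv_into_f_f)
  qed
  then have "eval_db_poly db u (dec_share (enc_share (share R i j))) = eval_db_poly db u (share R i j)" for u
    unfolding eval_db_poly_def using query_index_less by (intro sum.cong arg_cong2[where f = "(*)"] prod.cong) auto
  then show ?thesis unfolding Eval_def answer_def by simp
qed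

lemma answer_block:
  assumes R: "R \<in> randomness" and j: "j < k" and u: "u < w"
  shows "dec_sym (take c (drop (u * c) (Eval db j (enc_share (share R i j))))) = answer db j (share R i j) u"
  unfolding Eval_enc_share[OF R j] using u length_enc_sym answer_GF[OF R j]
  by (subst take_drop_concat_const) auto

end

subsection \<open>Reconstruction\<close>

context pir_construction begin

definition share_poly :: "(nat \<times> nat \<Rightarrow> gf2_closure) \<Rightarrow> nat \<Rightarrow> nat \<Rightarrow> gf2_closure poly" where
  "share_poly R i a = [:query i a:] + (\<Sum>r<t. Polynomial.smult (R (r, a)) ([:-\<beta>, 1:] ^ Suc r))"

lemma poly_share_poly: "poly (share_poly R i a) x = query i a + (\<Sum>r<t. R (r, a) * (x - \<beta>) ^ Suc r)"
proof -
  have linear: "poly [:-\<beta>, 1:] x = x - \<beta>" by (simp add: minus_eq_add_char2)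
  show ?thesis
    unfolding share_poly_def by (simp only: poly_add poly_sum poly_smult poly_power linear) simp
qed

lemma degree_share_poly: "Polynomial.degree (share_poly R i a) \<le> t"
  unfolding share_poly_def
proof (intro degree_add_le degree_sum_le)
  fix r assume "r \<in> {..<t}"
  then have "Polynomial.degree ([:-\<beta>, 1:] ^ Suc r) \<le> t"
    using degree_power_le[of "[:-\<beta>, 1:]" "Suc r"] by simp
  then show "Polynomial.degree (Polynomial.smult (R (r, a)) ([:-\<beta>, 1:] ^ Suc r)) \<le> t"
    using degree_smult_le order.trans by blast
qed simp_all

definition db_poly :: "bool list list \<Rightarrow> nat \<Rightarrow> (nat \<times> nat \<Rightarrow> gf2_closure) \<Rightarrow> nat \<Rightarrow> gf2_closure poly" where
  "db_poly db u R i = (\<Sum>i'<N. Polynomial.smult (block_elem (db ! i') u) (\<Prod>q<d. share_poly R i (query_index q i')))"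

lemma poly_db_poly: "poly (db_poly db u R i) x = eval_db_poly db u (\<lambda>a. poly (share_poly R i a) x)"
  unfolding db_poly_def eval_db_poly_def by (simp add: poly_sum poly_prod)

lemma degree_db_poly: "Polynomial.degree (db_poly db u R i) \<le> d * t"
  unfolding db_poly_def
proof (intro degree_sum_le)
  fix i'
  have "Polynomial.degree (\<Prod>q<d. share_poly R i (query_index q i'))
      \<le> (\<Sum>q<d. Polynomial.degree (share_poly R i (query_index q i')))"
    using degree_prod_sum_le[of "{..<d}" "\<lambda>q. share_poly R i (query_index q i')"] by (simp add: o_def)
  also have "\<dots> \<le> d * t"
    using sum_mono[of "{..<d}" _ "\<lambda>_. t", OF degree_share_poly] by simp
  finally show "Polynomial.degree (Polynomial.smult (block_elem (db ! i') u)
      (\<Prod>q<d. share_poly R i (query_index q i'))) \<le> d * t"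
    using degree_smult_le order.trans by blast
qed simp

text \<open>The answers are the values at the points \<open>\<alpha>\<^sub>j\<close> of a polynomial of degree \<open>\<le> dt\<close>;
  after multiplying by \<open>x^p\<close>, \<open>p < l = k - dt\<close>, it is still determined by \<open>k\<close> values, so
  the weighted sum interpolates its value at \<open>\<beta>\<close>, where the shares become the query.\<close>

lemma interpolate_at_beta:
  assumes p: "p < l"
  shows "(\<Sum>j<k. \<alpha> j ^ p * (lagrange_weight j * eval_db_poly db u (share R i j)))
       = \<beta> ^ p * eval_db_poly db u (query i)"
proof -
  define h where "h = db_poly db u R i * Polynomial.monom 1 p"
  have "Polynomial.degree h \<le> Polynomial.degree (db_poly db u R i) + Polynomial.degree (Polynomial.monom (1::gf2_closure) p)"
    unfolding h_def by (rule degree_mult_le)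
  also have "\<dots> \<le> d * t + p"
    using degree_db_poly degree_monom_le[of "1::gf2_closure" p] by (rule add_mono)
  finally have "Polynomial.degree h \<le> d * t + p" .
  then have degree_h: "Polynomial.degree h < card {..<k}" using p k_eq by simp
  have poly_h: "poly h x = eval_db_poly db u (\<lambda>a. poly (share_poly R i a) x) * x ^ p" for x
    unfolding h_def by (simp add: poly_db_poly poly_monom)
  have "poly h \<beta> = (\<Sum>j<k. poly h (\<alpha> j) * (\<Prod>j'\<in>{..<k}-{j}. (\<beta> - \<alpha> j') / (\<alpha> j - \<alpha> j')))"
    by (rule lagrange_interpolation[OF finite_lessThan inj_\<alpha> degree_h])
  also have "\<dots> = (\<Sum>j<k. \<alpha> j ^ p * (lagrange_weight j * eval_db_poly db u (share R i j)))"
  proof (rule sum.cong[OF refl])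
    fix j
    have "(\<lambda>a. poly (share_poly R i a) (\<alpha> j)) = share R i j"
      by (rule ext) (simp add: poly_share_poly share_def)
    then show "poly h (\<alpha> j) * (\<Prod>j'\<in>{..<k}-{j}. (\<beta> - \<alpha> j') / (\<alpha> j - \<alpha> j'))
        = \<alpha> j ^ p * (lagrange_weight j * eval_db_poly db u (share R i j))"
      unfolding poly_h lagrange_weight_def by (simp add: mult_ac)
  qed
  finally show ?thesis
    using poly_h[of \<beta>] by (simp add: poly_share_poly mult.commute)
qed

lemma query_query_index: "query i (query_index q i') = (if digit radix q i' = digit radix q i then 1 else 0)"
proof -
  have digit: "digit radix q i' < radix" by (rule digit_less[OF radix_pos])
  then have "(q * radix + digit radix q i') mod radix = digit radix q i'" by simp
  moreover have "(q * radix + digit radix q i') div radix = q" using digit radix_pos by simp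
  ultimately show ?thesis unfolding query_def query_index_def by simp
qed

lemma eval_db_poly_query:
  assumes i: "i < N"
  shows "eval_db_poly db u (query i) = block_elem (db ! i) u"
proof -
  have "(\<Prod>q<d. query i (query_index q i')) = (if i' = i then 1 else 0)" if i': "i' < N" for i'
  proof -
    have "(\<Prod>q<d'. query i (query_index q i'))
        = (if \<forall>q<d'. digit radix q i' = digit radix q i then 1 else 0)" for d'
      by (induction d') (auto simp: query_query_index less_Suc_eq)
    moreover have "(\<forall>q<d. digit radix q i' = digit radix q i) \<longleftrightarrow> i' = i"
      using digits_inj[OF radix_pos, of i' d i] i' i N_le by auto
    ultimately show ?thesis by simp
  qed
  then have "eval_db_poly db u (query i) = (\<Sum>i'<N. if i' = i then block_elem (db ! i') u else 0)"
    unfolding eval_db_poly_def by (intro sum.cong) auto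
  then show ?thesis using i by simp
qed

definition probe :: "(nat \<Rightarrow> gf2_closure) \<Rightarrow> nat \<Rightarrow> gf2_closure" where
  "probe b p = top_coord (\<beta> ^ p * (\<Sum>q<l. b q * \<beta> ^ (n - 1 - q)))"

lemma probe_expand:
  assumes b: "b \<in> GF_vecs c l"
  shows "probe b p = (\<Sum>q<l. b q * top_coord (\<beta> ^ (p + (n - 1 - q))))"
proof -
  have "\<beta> ^ p * (\<Sum>q<l. b q * \<beta> ^ (n - 1 - q)) = (\<Sum>q<l. b q * \<beta> ^ (p + (n - 1 - q)))"
    by (simp add: sum_distrib_left power_add mult_ac)
  then show ?thesis unfolding probe_def using b
    by (simp only:) (rule top_coord_linear, auto simp: GF_vecs_def)
qed

text \<open>The system \<open>probe b p\<close>, \<open>p < l\<close>, is unitriangular in the \<open>b q\<close>: \<open>\<beta>^(p + n - 1 - q)\<close> has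
  top coordinate 1 for \<open>q = p\<close> and 0 for \<open>q > p\<close>.\<close>

lemma top_coord_probe_power:
  assumes "p \<le> q" "q < l"
  shows "top_coord (\<beta> ^ (p + (n - 1 - q))) = (if q = p then 1 else 0)"
proof (cases "q = p")
  case True
  then have "p + (n - 1 - q) = n - 1" using assms l_le_n by simp
  then show ?thesis using top_coord_power[of "n - 1"] n1 True by simp
next
  case False
  then have "p + (n - 1 - q) < n - 1" using assms l_le_n by simp
  then show ?thesis using top_coord_power[of "p + (n - 1 - q)"] False by simp
qed

lemma probe_eq_zero_imp_zero:
  assumes b: "b \<in> GF_vecs c l" and zero: "\<And>p. p < l \<Longrightarrow> probe b p = 0"
  shows "b = 0"
proof -
  have "p < l \<longrightarrow> b p = 0" for p
  proof (induction p rule: less_induct)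
    case (less p)
    show ?case
    proof
      assume p: "p < l"
      have "b q * top_coord (\<beta> ^ (p + (n - 1 - q))) = (if q = p then b p else 0)" if "q < l" for q
      proof (cases "q < p")
        case True
        then show ?thesis using less.IH p by simp
      next
        case False
        then show ?thesis using top_coord_probe_power[of p q] that by simp
      qed
      then have "(\<Sum>q<l. b q * top_coord (\<beta> ^ (p + (n - 1 - q)))) = (\<Sum>q<l. if q = p then b p else 0)"
        by (intro sum.cong) auto
      then show "b p = 0" using zero[OF p] probe_expand[OF b] p by (simp add: sum.delta')
    qed
  qed
  moreover have "b p = 0" if "\<not> p < l" for p
    using b that by (simp add: GF_vecs_def)
  ultimately show ?thesis by (auto simp: fun_eq_iff)
qed

lemma probe_inj:
  assumes b: "b \<in> GF_vecs c l" and b': "b' \<in> GF_vecs c l" and eq: "\<And>p. p < l \<Longrightarrow> probe b p = probe b' p"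
  shows "b = b'"
proof -
  have "probe (b + b') p = probe b p + probe b' p" for p
    using probe_expand[OF b] probe_expand[OF b'] probe_expand[OF GF_vecs_add[OF b b']]
    by (simp add: sum.distrib distrib_right)
  then have "b + b' = 0"
    using eq by (intro probe_eq_zero_imp_zero[OF GF_vecs_add[OF b b']]) simp
  then have "b q + b' q = 0" for q
    by (metis plus_fun_apply zero_fun_apply)
  then show ?thesis
    by (intro ext) (metis add_self_char2 add_right_cancel)
qed

definition answer_sum :: "bool list list \<Rightarrow> nat \<Rightarrow> nat \<Rightarrow> gf2_closure" where
  "answer_sum outs u p = (\<Sum>j<k. \<alpha> j ^ p * dec_sym (take c (drop (u * c) (outs ! j))))"

definition decode_block :: "bool list list \<Rightarrow> nat \<Rightarrow> nat \<Rightarrow> gf2_closure" where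
  "decode_block outs u = (THE b. b \<in> GF_vecs c l \<and> (\<forall>p<l. probe b p = answer_sum outs u p))"

definition Rec :: "bool list list \<Rightarrow> bool list" where
  "Rec outs = concat (map (\<lambda>idx. enc_sym (decode_block outs (idx div l) (idx mod l))) [0..<w * l])"

lemma answer_sum_outputs:
  fixes db :: "bool list list"
  assumes R: "R \<in> randomness" and i: "i < N" and u: "u < w" and p: "p < l"
  defines "outs \<equiv> map (\<lambda>j. Eval db j (enc_share (share R i j))) [0..<k]"
  shows "answer_sum outs u p = probe (block_vec (db ! i) u) p"
proof -
  have "answer_sum outs u p = (\<Sum>j<k. \<alpha> j ^ p * answer db j (share R i j) u)"
    unfolding answer_sum_def outs_def using answer_block[OF R _ u] by simp
  also have "\<dots> = top_coord (\<Sum>j<k. \<alpha> j ^ p * (lagrange_weight j * eval_db_poly db u (share R i j)))"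
    unfolding answer_def using \<alpha>_GF share_F[OF R] unfolding lagrange_weight_def
    by (intro top_coord_linear[symmetric]) (auto intro!: F_mult F_prod eval_db_poly_F)
  also have "\<dots> = probe (block_vec (db ! i) u) p"
    unfolding interpolate_at_beta[OF p] eval_db_poly_query[OF i] probe_def block_elem_def ..
  finally show ?thesis .
qed

lemma Rec_correct:
  assumes db: "valid_db N (w * l * c) db" and i: "i < N" and R: "R \<in> randomness"
  shows "Rec (map (\<lambda>j. Eval db j (enc_share (share R i j))) [0..<k]) = db ! i"
proof -
  define outs where "outs = map (\<lambda>j. Eval db j (enc_share (share R i j))) [0..<k]"
  define r where "r = db ! i"
  have length_r: "length r = w * l * c" using db i unfolding valid_db_def r_def by auto
  have block: "enc_sym (decode_block outs (idx div l) (idx mod l)) = take c (drop (idx * c) r)"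
    if idx: "idx < w * l" for idx
  proof -
    have u: "idx div l < w" using idx l1 by (simp add: less_mult_imp_div_less)
    have "decode_block outs (idx div l) = block_vec r (idx div l)"
      unfolding decode_block_def
      using answer_sum_outputs[OF R i u] probe_inj block_vec_GF_vecs
      unfolding outs_def r_def by (intro the_equality) auto
    moreover have "(idx div l * l + idx mod l) * c = idx * c" by simp
    moreover have "Suc idx * c \<le> w * l * c" using idx by (intro mult_right_mono) auto
    ultimately show ?thesis
      using l1 length_r by (simp add: block_vec_def record_block_def enc_sym_dec_sym)
  qed
  have "Rec outs = concat (map (\<lambda>idx. take c (drop (idx * c) r)) [0..<w * l])"
    unfolding Rec_def using block by (intro arg_cong[where f = concat] map_cong) auto
  also have "\<dots> = r" by (rule concat_blocks) (simp add: length_r)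
  finally show ?thesis unfolding outs_def r_def .
qed

theorem is_PIR: "is_PIR t k N (w * l * c) Share Eval Rec"
  unfolding is_PIR_def
proof (intro conjI allI impI ballI)
  fix i s assume "i < N" "s \<in> set_pmf (Share i)"
  then show "length s = k" using set_pmf_Share by auto
next
  fix db i s assume db_i: "valid_db N (w * l * c) db \<and> i < N" and "s \<in> set_pmf (Share i)"
  then obtain R where R: "R \<in> randomness" and s: "s = map (\<lambda>j. enc_share (share R i j)) [0..<k]"
    using set_pmf_Share by auto
  have "map (\<lambda>j. Eval db j (s ! j)) [0..<k] = map (\<lambda>j. Eval db j (enc_share (share R i j))) [0..<k]"
    unfolding s by simp
  then show "Rec (map (\<lambda>j. Eval db j (s ! j)) [0..<k]) = db ! i"
    using Rec_correct[of db i R] db_i R by (simp only:)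
next
  fix T i i' assume "T \<subseteq> {..<k} \<and> card T \<le> t \<and> i < N \<and> i' < N"
  then show "map_pmf (\<lambda>s. map ((!) s) (sorted_list_of_set T)) (Share i)
           = map_pmf (\<lambda>s. map ((!) s) (sorted_list_of_set T)) (Share i')"
    using Share_restrict_uniform[of T] by simp
qed

theorem download_cost: "download_cost_eq k N (w * l * c) Share Eval (w * k * c)"
  unfolding download_cost_eq_def by (simp add: length_Eval sum_list_triv)

theorem upload_cost: "upload_cost_le N Share (real (k * (query_len * LF)))"
  unfolding upload_cost_le_def set_pmf_Share by (auto simp: length_enc_share o_def sum_list_triv)

end

section \<open>Choice of parameters\<close>

lemma exists_pir_protocol:
  fixes d t k w N radix :: nat
  assumes t1: "t \<ge> 1" and k: "d * t + 1 \<le> k" and c1: "clog2 k \<ge> 1" and k_le: "k \<le> 2 ^ clog2 k"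
    and radix_pos: "radix > 0" and N_le: "N \<le> radix ^ d"
  shows "\<exists>Share Eval Rec. is_PIR t k N (w * (k - d * t) * clog2 k) Share Eval Rec \<and>
     upload_cost_le N Share (real (k * (d * radix * (clog2 k * (2 * (k - d * t) + 1))))) \<and>
     download_cost_eq k N (w * (k - d * t) * clog2 k) Share Eval (w * k * clog2 k)"
proof -
  define c where "c = clog2 k"
  define l where "l = k - d * t"
  define M where "M = 2 * l + 1"
  have l1: "l \<ge> 1" and k_eq: "k = d * t + l" using k unfolding l_def by auto
  obtain \<beta> where \<beta>: "\<beta> \<in> GF (c * M)" "powers_indep c \<beta> l" "\<beta> \<notin> GF c"
    using exists_indep_beta[OF c1[folded c_def] l1] unfolding M_def by blast
  obtain n where n: "l \<le> n" "n \<le> M" "powers_indep c \<beta> n" "\<beta> ^ n \<in> pow_comb \<beta> n ` GF_vecs c n"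
    using exists_minimal_relation[OF c1[folded c_def] _ \<beta>(1) \<beta>(2)] unfolding M_def by auto
  interpret simple_extension c n \<beta>
    using c1 l1 n by unfold_locales (auto simp: c_def)
  obtain \<alpha> where \<alpha>: "\<alpha> ` {..<k} \<subseteq> GF c" "inj_on \<alpha> {..<k}"
    using card_le_inj[of "{..<k}" "GF c"] GF_card finite_GF c1 k_le unfolding c_def by auto
  obtain enc_sym :: "gf2_closure \<Rightarrow> bool list"
    where enc_sym: "inj_on enc_sym (GF c)" "\<forall>x. length (enc_sym x) = c" "enc_sym ` GF c = {xs. length xs = c}"
    using exists_bij_encoding[OF finite_GF GF_card] c1 unfolding c_def by blast
  have "(2::nat) ^ (c * n) \<le> 2 ^ (c * M)" using n(2) by (intro power_increasing) auto
  then have "card F \<le> 2 ^ (c * M)" using card_F_le by linarith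
  then obtain enc_F :: "gf2_closure \<Rightarrow> bool list" where enc_F: "inj_on enc_F F" "\<forall>x. length (enc_F x) = c * M"
    using exists_encoding[OF finite_F] by blast
  interpret pir_construction c n \<beta> k d t w N radix l "c * M" \<alpha> enc_sym enc_F
    using k_eq l1 n t1 \<alpha> \<beta> radix_pos N_le enc_sym enc_F by unfold_locales auto
  have "k * (query_len * (c * M)) = k * (d * radix * (clog2 k * (2 * (k - d * t) + 1)))"
    unfolding query_len_def c_def M_def l_def by (simp add: mult_ac)
  then have "upload_cost_le N Share (real (k * (d * radix * (clog2 k * (2 * (k - d * t) + 1)))))"
    using upload_cost by (simp only:)
  then show ?thesis
    using is_PIR download_cost unfolding c_def l_def by blast
qed

lemma
  assumes "k \<ge> 2"
  shows clog2_ge_1: "clog2 k \<ge> 1"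
    and le_two_power_clog2: "k \<le> 2 ^ clog2 k"
    and clog2_le_ln: "real (clog2 k) \<le> 3 * ln (real k)"
proof -
  define x where "x = log 2 (real k)"
  have x1: "x \<ge> 1" unfolding x_def using assms by simp
  have clog2_x: "real (clog2 k) = of_int \<lceil>x\<rceil>" unfolding clog2_def x_def[symmetric] using x1 by simp
  have ceiling: "x \<le> of_int \<lceil>x\<rceil>" "of_int \<lceil>x\<rceil> < x + 1"
    using ceiling_correct[of x] by linarith+
  show "clog2 k \<ge> 1" using clog2_x ceiling x1 by linarith
  have "real k = 2 powr x" unfolding x_def using assms by simp
  also have "\<dots> \<le> 2 powr (real (clog2 k))" using clog2_x ceiling by (intro powr_mono) auto
  also have "\<dots> = real (2 ^ clog2 k)" by (simp add: powr_realpow)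
  finally show "k \<le> 2 ^ clog2 k" by linarith
  have "real (clog2 k) \<le> 2 * x" using clog2_x ceiling x1 by linarith
  also have "\<dots> = 2 * ln (real k) / ln 2" unfolding x_def by (simp add: log_def)
  also have "\<dots> \<le> 3 * ln (real k)"
    using ln2_ge_two_thirds assms by (simp add: field_simps)
  finally show "real (clog2 k) \<le> 3 * ln (real k)" .
qed

lemma
  assumes N: "N \<ge> 1" and d: "d \<ge> 1"
  defines "radix \<equiv> nat \<lceil>real N powr (1 / real d)\<rceil>"
  shows radix_pos: "radix > 0"
    and le_radix_power: "N \<le> radix ^ d"
    and radix_le: "real radix \<le> 2 * real N powr (1 / real d)"
proof -
  define x where "x = real N powr (1 / real d)"
  have x1: "x \<ge> 1" unfolding x_def using N by (intro ge_one_powr_ge_zero) auto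
  have radix_x: "real radix = of_int \<lceil>x\<rceil>" unfolding radix_def x_def[symmetric] using x1 by simp
  have ceiling: "x \<le> of_int \<lceil>x\<rceil>" "of_int \<lceil>x\<rceil> < x + 1"
    using ceiling_correct[of x] by linarith+
  show "radix > 0" using radix_x ceiling x1 by linarith
  have "real N = x ^ d"
    unfolding x_def using d N by (simp add: powr_realpow[symmetric] powr_powr)
  also have "\<dots> \<le> real radix ^ d" using radix_x ceiling x1 by (intro power_mono) auto
  finally show "N \<le> radix ^ d" by (simp flip: of_nat_power)
  show "real radix \<le> 2 * real N powr (1 / real d)" using radix_x ceiling x1 unfolding x_def by linarith
qed

lemma upload_cost_le_mono: "upload_cost_le N Share U \<Longrightarrow> U \<le> U' \<Longrightarrow> upload_cost_le N Share U'"
  unfolding upload_cost_le_def by force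

lemma upload_bound:
  fixes d t k N :: nat
  assumes t1: "t \<ge> 1" and k: "d * t + 1 \<le> k" and k2: "k \<ge> 2"
    and radix: "real radix \<le> 2 * x" and x1: "x \<ge> 1"
  shows "real (k * (d * radix * (clog2 k * (2 * (k - d * t) + 1)))) \<le> 18 * real k ^ 3 * ln (real k) * x"
proof -
  have ln_k: "ln (real k) \<ge> 0" using k2 by simp
  have "d \<le> d * t" using t1 by simp
  then have "d \<le> k" using k by linarith
  then have A: "real d * real radix \<le> real k * (2 * x)"
    using radix by (intro mult_mono) auto
  have "2 * (k - d * t) + 1 \<le> 3 * k" using k2 by linarith
  then have "real (2 * (k - d * t) + 1) \<le> 3 * real k" by linarith
  then have B: "real (clog2 k) * real (2 * (k - d * t) + 1) \<le> 3 * ln (real k) * (3 * real k)"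
    using clog2_le_ln[OF k2] ln_k by (intro mult_mono) auto
  have "(real d * real radix) * (real (clog2 k) * real (2 * (k - d * t) + 1))
      \<le> (real k * (2 * x)) * (3 * ln (real k) * (3 * real k))"
    by (rule mult_mono[OF A B]) (use ln_k x1 in auto)
  then have "real k * ((real d * real radix) * (real (clog2 k) * real (2 * (k - d * t) + 1)))
      \<le> real k * ((real k * (2 * x)) * (3 * ln (real k) * (3 * real k)))"
    by (rule mult_left_mono) simp
  then show ?thesis by (simp add: power3_eq_cube mult_ac distrib_left)
qed

lemma download_rate_blocks:
  assumes "a > 0" "b > 0" "m \<le> k" "k > 0"
  shows "download_rate (a * (k - m) * b) (a * k * b) = 1 - real m / real k"
  using assms by (simp add: download_rate_def of_nat_diff field_simps)

theorem pir_protocol_with_rate: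
  fixes d t k w N :: nat
  assumes d: "d \<ge> 1" and t: "t \<ge> 1" and w: "w \<ge> 1" and N: "N \<ge> 1" and k: "d * t + 1 \<le> k"
  shows "\<exists>Share Eval Rec.
    is_PIR t k N (w * (k - d * t) * clog2 k) Share Eval Rec \<and>
    upload_cost_le N Share (18 * real k ^ 3 * ln (real k) * real N powr (1 / real d)) \<and>
    download_cost_eq k N (w * (k - d * t) * clog2 k) Share Eval (w * k * clog2 k) \<and>
    download_rate (w * (k - d * t) * clog2 k) (w * k * clog2 k) = 1 - real (d * t) / real k"
proof -
  have "d * t \<ge> 1" using d t by simp
  then have k2: "k \<ge> 2" using k by linarith
  have x1: "real N powr (1 / real d) \<ge> 1" using N by (intro ge_one_powr_ge_zero) auto
  define radix where "radix = nat \<lceil>real N powr (1 / real d)\<rceil>"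
  obtain Share Eval Rec where protocol:
    "is_PIR t k N (w * (k - d * t) * clog2 k) Share Eval Rec"
    "upload_cost_le N Share (real (k * (d * radix * (clog2 k * (2 * (k - d * t) + 1)))))"
    "download_cost_eq k N (w * (k - d * t) * clog2 k) Share Eval (w * k * clog2 k)"
    using exists_pir_protocol[OF t k clog2_ge_1[OF k2] le_two_power_clog2[OF k2]
        radix_pos[OF N d] le_radix_power[OF N d]]
    unfolding radix_def by blast
  moreover have "upload_cost_le N Share (18 * real k ^ 3 * ln (real k) * real N powr (1 / real d))"
    using upload_cost_le_mono[OF protocol(2) upload_bound[OF t k k2 _ x1]] radix_le[OF N d]
    unfolding radix_def by blast
  moreover have "download_rate (w * (k - d * t) * clog2 k) (w * k * clog2 k) = 1 - real (d * t) / real k"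
    using w clog2_ge_1[OF k2] k by (intro download_rate_blocks) auto
  ultimately show ?thesis by blast
qed

theorem mainTheorem8:
  "\<exists>C::real. C > 0 \<and>
    (\<forall>d t k w N :: nat. d \<ge> 1 \<and> t \<ge> 1 \<and> k \<ge> 1 \<and> w \<ge> 1 \<and> N \<ge> 1 \<and> d * t + 1 \<le> k \<longrightarrow>
      (let L = w * (k - d * t) * clog2 k; D = w * k * clog2 k in
       \<exists>Share Eval Rec.
         is_PIR t k N L Share Eval Rec \<and>
         upload_cost_le N Share (C * real k ^ 3 * ln (real k) * real N powr (1 / real d)) \<and>
         download_cost_eq k N L Share Eval D \<and>
         download_rate L D = 1 - real (d * t) / real k))"
  unfolding Let_def using pir_protocol_with_rate by (intro exI[of _ 18]) auto

end
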